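(* Let $G$ be a finite group, $A=\mathbb{C}[[z]]$ with maximal ideal $\mathfrak{m}=(z)$, and $\phi:G\to\Aut_{\mathbb{R}}(A)$ an injective group homomorphism. Then exactly one of the following holds. (a) Every $\phi_g$ is $\mathbb{C}$-linear. Then $G=\langle\varrho\mid\varrho^n=e\rangle$ is cyclic of some order $n$, and there is a local parameter $w\in\mathfrak{m}$ (generator of $\mathfrak{m}$) with $\phi_\varrho(w)=\xi w$, where $\xi=\exp(2\pi i/n)$. (b) Otherwise $G\cong D_n=\langle\sigma,\varrho\mid\sigma^2=e=\varrho^n,\ \sigma\varrho\sigma^{-1}=\varrho^{-1}\rangle$ for some $n\in\mathbb{N}$, and there is a local parameter $w\in\mathfrak{m}$ such that $\phi_\sigma(\alpha)=\bar\alpha$ for $\alpha\in\mathbb{C}$, $\phi_\sigma(w)=w$, $\phi_\varrho(\alpha)=\alpha$ for $\alpha\in\mathbb{C}$, and $\phi_\varrho(w)=\xi w$ with $\xi=\exp(2\pi i/n)$. *)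

theory Defs
  imports Complex_Main "HOL-Computational_Algebra.Formal_Power_Series" "HOL-Algebra.Generated_Groups"
begin

text \<open>A = C[[z]] is modelled as the type complex fps.
  An element of Aut_R(A): a bijective ring endomorphism of C[[z]] which is R-linear.\<close>
definition real_fps_aut :: "(complex fps \<Rightarrow> complex fps) \<Rightarrow> bool" where
  "real_fps_aut f \<longleftrightarrow> bij f
     \<and> (\<forall>a b. f (a + b) = f a + f b)
     \<and> (\<forall>a b. f (a * b) = f a * f b)
     \<and> f 1 = 1
     \<and> (\<forall>r a. f (fps_const (complex_of_real r) * a) = fps_const (complex_of_real r) * f a)"

definition complex_linear_fps :: "(complex fps \<Rightarrow> complex fps) \<Rightarrow> bool" where
  "complex_linear_fps f \<longleftrightarrow> (\<forall>c a. f (fps_const c * a) = fps_const c * f a)"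

definition fps_max_ideal :: "complex fps set" where
  "fps_max_ideal = {a. fps_nth a 0 = 0}"

definition local_parameter :: "complex fps \<Rightarrow> bool" where
  "local_parameter w \<longleftrightarrow> w \<in> fps_max_ideal \<and> {w * a | a. True} = fps_max_ideal"

end

theory Submission
  imports Defs "HOL-Algebra.Multiplicative_Group"
begin

(* A real automorphism of C[[z]] either fixes or conjugates the constants and preserves the
   maximal ideal m, so it acts semilinearly on m/m^2 = C z, by z |-> c_g z.  On the subgroup
   of C-linear elements (the rotations) g |-> c_g is a character, and averaging z against it
   gives a local parameter w with phi_h w = c_h w for all rotations h.  A C-linear
   automorphism fixing a local parameter is the identity, so by faithfulness the character
   is injective: the rotations form a cyclic group mapped onto the n-th roots of unity.
   An antilinear sigma has c_(sigma^2) = |c_sigma|^2, a positive root of unity, so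
   sigma^2 = e; conjugation by sigma inverts the character, which yields the dihedral
   relations, and symmetrising w under sigma yields the parameter of case (b). *)

unbundle fps_syntax

section \<open>Real automorphisms of the power series ring\<close>

(* How a real automorphism acts on the constants, see real_fps_aut_const. *)
definition fps_aut_scalar :: "(complex fps \<Rightarrow> complex fps) \<Rightarrow> complex \<Rightarrow> complex" where
  "fps_aut_scalar f c = (if complex_linear_fps f then c else cnj c)"

lemma fps_const_eq_iff [simp]: "fps_const a = fps_const b \<longleftrightarrow> a = b"
  by (metis fps_nth_fps_const[of _ 0] if_True)

lemma
  assumes "real_fps_aut f"
  shows real_fps_aut_additive: "additive f"
    and real_fps_aut_mult: "f (a * b) = f a * f b"
    and real_fps_aut_one: "f 1 = 1"
    and real_fps_aut_bij: "bij f"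
    and real_fps_aut_of_real_mult: "f (fps_const (of_real r) * a) = fps_const (of_real r) * f a"
  using assms unfolding real_fps_aut_def by (auto intro: additive.intro)

lemma real_fps_aut_comp:
  assumes "real_fps_aut f" and "real_fps_aut g"
  shows "real_fps_aut (f \<circ> g)"
  using assms unfolding real_fps_aut_def by (auto intro: bij_comp)

lemma real_fps_aut_const:
  assumes f: "real_fps_aut f"
  shows "f (fps_const c) = fps_const (fps_aut_scalar f c)"
proof (cases "complex_linear_fps f")
  case True
  then have "f (fps_const c * 1) = fps_const c * f 1"
    unfolding complex_linear_fps_def by blast
  with True show ?thesis
    by (simp add: fps_aut_scalar_def real_fps_aut_one[OF f])
next
  case False
  define x where "x = f (fps_const \<i>)"
  have f_const: "f (fps_const d) = fps_const (of_real (Re d)) + fps_const (of_real (Im d)) * x" for d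
  proof -
    have f_real: "f (fps_const (of_real r)) = fps_const (of_real r)" for r
      using real_fps_aut_of_real_mult[OF f, of r 1] by (simp add: real_fps_aut_one[OF f])
    have d: "fps_const d = fps_const (of_real (Re d)) + fps_const (of_real (Im d)) * fps_const \<i>"
      by (simp add: complex_eq_iff)
    show ?thesis
      unfolding x_def
      by (subst d) (simp only: additive.add[OF real_fps_aut_additive[OF f]] f_real
          real_fps_aut_of_real_mult[OF f])
  qed
  (* x^2 = -1 leaves x = i or x = -i, and x = i would make f complex linear. *)
  have "x * x = f (fps_const \<i> * fps_const \<i>)"
    unfolding x_def by (simp only: real_fps_aut_mult[OF f])
  also have "fps_const \<i> * fps_const \<i> = - 1"
    by (simp flip: fps_const_neg)
  also have "f (- 1) = - 1"
    using f by (simp add: additive.minus[OF real_fps_aut_additive] real_fps_aut_one)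
  finally have "(x - fps_const \<i>) * (x + fps_const \<i>) = 0"
    by (simp add: algebra_simps flip: fps_const_neg)
  then have "x = fps_const \<i> \<or> x = fps_const (- \<i>)"
    by (simp add: eq_neg_iff_add_eq_0 flip: fps_const_neg)
  moreover have "x \<noteq> fps_const \<i>"
  proof
    assume "x = fps_const \<i>"
    then have "f (fps_const d) = fps_const d" for d
      using f_const[of d] by (simp add: complex_eq_iff)
    then have "complex_linear_fps f"
      unfolding complex_linear_fps_def by (simp add: real_fps_aut_mult[OF f])
    with False show False ..
  qed
  ultimately show ?thesis
    using False f_const[of c] by (simp add: fps_aut_scalar_def complex_eq_iff)
qed

lemma complex_linear_fps_iff_scalar_i:
  "complex_linear_fps f \<longleftrightarrow> fps_aut_scalar f \<i> = \<i>"
  by (simp add: fps_aut_scalar_def complex_eq_iff)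

lemma complex_linear_fps_comp:
  assumes f: "real_fps_aut f" and g: "real_fps_aut g"
  shows "complex_linear_fps (f \<circ> g) \<longleftrightarrow> (complex_linear_fps f \<longleftrightarrow> complex_linear_fps g)"
proof -
  have "fps_aut_scalar (f \<circ> g) \<i> = fps_aut_scalar f (fps_aut_scalar g \<i>)"
    using real_fps_aut_const[OF real_fps_aut_comp[OF f g], of \<i>]
    by (simp add: real_fps_aut_const[OF f] real_fps_aut_const[OF g])
  then show ?thesis
    unfolding complex_linear_fps_iff_scalar_i by (auto simp: fps_aut_scalar_def complex_eq_iff)
qed

lemma fps_eq_const_plus_X_mult_shift:
  fixes a :: "'a::comm_semiring_1 fps"
  shows "a = fps_const (a $ 0) + fps_X * fps_shift 1 a"
  by (rule fps_ext) (simp add: fps_X_mult_nth)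

lemma real_fps_aut_X_nth_0:
  assumes f: "real_fps_aut f"
  shows "f fps_X $ 0 = 0"
proof (rule ccontr)
  (* Otherwise f z is a unit, and then so is z. *)
  assume "f fps_X $ 0 \<noteq> 0"
  obtain b where "f b = inverse (f fps_X)"
    using real_fps_aut_bij[OF f] by (metis bij_pointE)
  with \<open>f fps_X $ 0 \<noteq> 0\<close> have "f (fps_X * b) = f 1"
    by (simp add: real_fps_aut_mult[OF f] real_fps_aut_one[OF f] inverse_mult_eq_1')
  then have "fps_X * b = 1"
    by (rule injD[OF bij_is_inj[OF real_fps_aut_bij[OF f]]])
  then show False
    using fps_mult_nth_0[of fps_X b] by simp
qed

lemma
  assumes f: "real_fps_aut f"
  shows real_fps_aut_nth_0: "f a $ 0 = fps_aut_scalar f (a $ 0)"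
    and real_fps_aut_nth_1: "f a $ 1 = fps_aut_scalar f (a $ 1) * f fps_X $ 1"
proof -
  have f_a: "f a = fps_const (fps_aut_scalar f (a $ 0)) + f fps_X * f (fps_shift 1 a)" for a
    by (subst fps_eq_const_plus_X_mult_shift)
       (simp add: additive.add[OF real_fps_aut_additive[OF f]] real_fps_aut_mult[OF f]
         real_fps_aut_const[OF f])
  show nth_0: "f a $ 0 = fps_aut_scalar f (a $ 0)" for a
    using f_a[of a] real_fps_aut_X_nth_0[OF f] by simp
  show "f a $ 1 = fps_aut_scalar f (a $ 1) * f fps_X $ 1"
    using f_a[of a] real_fps_aut_X_nth_0[OF f] by (simp add: fps_mult_nth_1 nth_0)
qed

lemma fps_eq_X_mult_shift:
  fixes a :: "'a::comm_semiring_1 fps"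
  shows "a $ 0 = 0 \<Longrightarrow> a = fps_X * fps_shift 1 a"
  using fps_eq_const_plus_X_mult_shift[of a] by simp

lemma local_parameterI:
  assumes w0: "w $ 0 = 0" and w1: "w $ 1 \<noteq> 0"
  shows "local_parameter w"
proof -
  have "{b. b $ 0 = 0} \<subseteq> {w * a |a. True}"
  proof
    fix b :: "complex fps"
    assume "b \<in> {b. b $ 0 = 0}"
    then have "b = fps_X * fps_shift 1 b"
      by (intro fps_eq_X_mult_shift) simp
    also have "fps_X = w * inverse (fps_shift 1 w)"
    proof -
      have "w * inverse (fps_shift 1 w) = fps_X * (fps_shift 1 w * inverse (fps_shift 1 w))"
        by (subst (1) fps_eq_X_mult_shift[OF w0]) (simp only: mult.assoc)
      also have "fps_shift 1 w * inverse (fps_shift 1 w) = 1"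
        using w1 by (intro inverse_mult_eq_1') simp
      finally show ?thesis
        by simp
    qed
    finally show "b \<in> {w * a |a. True}"
      by (auto simp: mult.assoc)
  qed
  with w0 show ?thesis
    unfolding local_parameter_def fps_max_ideal_def by auto
qed

lemma real_fps_aut_fixing_local_parameter:
  assumes f: "real_fps_aut f" and lin: "complex_linear_fps f"
    and w: "local_parameter w" and fw: "f w = w"
  shows "f a = a"
proof (rule fps_ext)
  fix j
  (* Writing b = b_0 + w b' gives f b - b = w (f b' - b'), so f a - a is divisible by
     every power of w. *)
  have "\<exists>b. f a - a = w ^ k * (f b - b)" for k
  proof (induction k)
    case (Suc k)
    then obtain b where b: "f a - a = w ^ k * (f b - b)"
      by blast
    have "b - fps_const (b $ 0) \<in> fps_max_ideal"
      by (simp add: fps_max_ideal_def)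
    then obtain b' where "b - fps_const (b $ 0) = w * b'"
      using w unfolding local_parameter_def by blast
    then have b': "b = fps_const (b $ 0) + w * b'"
      by (simp add: algebra_simps)
    have "f b - b = w * (f b' - b')"
      using lin f fw
      by (subst (1 2) b')
         (simp add: additive.add[OF real_fps_aut_additive[OF f]] real_fps_aut_mult[OF f]
           real_fps_aut_const fps_aut_scalar_def algebra_simps)
    with b show ?case
      by (auto simp: mult.assoc)
  qed (use exI[of _ a] in simp)
  then obtain b where "f a - a = w ^ Suc j * (f b - b)"
    by blast
  also have "w = fps_X * fps_shift 1 w"
    using w unfolding local_parameter_def fps_max_ideal_def by (intro fps_eq_X_mult_shift) simp
  finally have "f a - a = fps_X ^ Suc j * (fps_shift 1 w ^ Suc j * (f b - b))"
    by (simp add: power_mult_distrib mult.assoc)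
  then have "(f a - a) $ j = 0"
    by (simp only: fps_X_power_mult_nth) simp
  then show "f a $ j = a $ j"
    by simp
qed

section \<open>Faithful actions of finite groups\<close>

lemma (in group) subgroup_nat_pow_closed: "subgroup H G \<Longrightarrow> h \<in> H \<Longrightarrow> h [^] (n::nat) \<in> H"
  using subgroup_int_pow_closed[of H h "int n"] by (simp add: int_pow_int)

locale faithful_fps_action = group G for G (structure) +
  fixes \<phi> :: "'a \<Rightarrow> complex fps \<Rightarrow> complex fps"
  assumes finite_carrier: "finite (carrier G)"
    and real_fps_aut_phi: "g \<in> carrier G \<Longrightarrow> real_fps_aut (\<phi> g)"
    and phi_mult: "g \<in> carrier G \<Longrightarrow> h \<in> carrier G \<Longrightarrow> \<phi> (g \<otimes> h) = \<phi> g \<circ> \<phi> h"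
    and inj_on_phi: "inj_on \<phi> (carrier G)"
begin

lemma phi_mult_apply: "g \<in> carrier G \<Longrightarrow> h \<in> carrier G \<Longrightarrow> \<phi> (g \<otimes> h) a = \<phi> g (\<phi> h a)"
  by (simp add: phi_mult)

lemma phi_one: "\<phi> \<one> = id"
proof
  fix a
  have "\<phi> \<one> (\<phi> \<one> a) = \<phi> \<one> a"
    using phi_mult_apply[of \<one> \<one> a] by simp
  then show "\<phi> \<one> a = id a"
    using bij_is_inj[OF real_fps_aut_bij[OF real_fps_aut_phi[OF one_closed]]] by (simp add: inj_eq)
qed

lemma complex_linear_fps_phi_mult:
  "g \<in> carrier G \<Longrightarrow> h \<in> carrier G \<Longrightarrow>
    complex_linear_fps (\<phi> (g \<otimes> h)) \<longleftrightarrow> (complex_linear_fps (\<phi> g) \<longleftrightarrow> complex_linear_fps (\<phi> h))"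
  by (simp add: phi_mult complex_linear_fps_comp real_fps_aut_phi)

definition rotations :: "'a set" where
  "rotations = {g \<in> carrier G. complex_linear_fps (\<phi> g)}"

lemma rotations_subset_carrier: "rotations \<subseteq> carrier G"
  by (auto simp: rotations_def)

(* Modulo m^2, phi g maps alpha z to fps_aut_scalar (phi g) alpha * cotangent g * z, so
   cotangent g describes the action of g on the cotangent space m/m^2. *)
definition cotangent :: "'a \<Rightarrow> complex" where
  "cotangent g = \<phi> g fps_X $ 1"

lemma cotangent_mult:
  "cotangent (g \<otimes> h) = fps_aut_scalar (\<phi> g) (cotangent h) * cotangent g"
  if "g \<in> carrier G" "h \<in> carrier G"
  unfolding cotangent_def phi_mult_apply[OF that]
  by (rule real_fps_aut_nth_1[OF real_fps_aut_phi[OF that(1)]])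

lemma cotangent_one: "cotangent \<one> = 1"
  by (simp add: cotangent_def phi_one)

lemma cotangent_mult_rotation:
  "g \<in> rotations \<Longrightarrow> h \<in> carrier G \<Longrightarrow> cotangent (g \<otimes> h) = cotangent g * cotangent h"
  by (simp add: rotations_def cotangent_mult fps_aut_scalar_def)

lemma subgroup_rotations: "subgroup rotations G"
proof
  show "rotations \<subseteq> carrier G"
    by (rule rotations_subset_carrier)
  show "\<one> \<in> rotations"
    by (simp add: rotations_def phi_one complex_linear_fps_def)
  show "g \<otimes> h \<in> rotations" if "g \<in> rotations" "h \<in> rotations" for g h
    using that by (simp add: rotations_def complex_linear_fps_phi_mult)
  show "inv g \<in> rotations" if "g \<in> rotations" for g
    using that complex_linear_fps_phi_mult[of g "inv g"]
    by (simp add: rotations_def phi_one complex_linear_fps_def)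
qed

lemma phi_rotation_const: "g \<in> rotations \<Longrightarrow> \<phi> g (fps_const \<alpha>) = fps_const \<alpha>"
  by (simp add: rotations_def real_fps_aut_const real_fps_aut_phi fps_aut_scalar_def)

lemma phi_rotation_lincomb:
  "g \<in> rotations \<Longrightarrow>
    \<phi> g (fps_const c * a + fps_const d * b) = fps_const c * \<phi> g a + fps_const d * \<phi> g b"
  using rotations_subset_carrier
  by (auto simp: rotations_def complex_linear_fps_def additive.add[OF real_fps_aut_additive]
      real_fps_aut_phi)

lemma finite_rotations: "finite rotations"
  using finite_carrier by (simp add: rotations_def)

lemma card_rotations_pos: "card rotations > 0"
  using finite_rotations subgroup.one_closed[OF subgroup_rotations] card_gt_0_iff by blast

lemma cotangent_mult_inv_rotation: "g \<in> rotations \<Longrightarrow> cotangent g * cotangent (inv g) = 1"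
  using rotations_subset_carrier
  by (metis cotangent_mult_rotation cotangent_one inv_closed r_inv subsetD)

(* Averaging z against the character cotangent of the rotation group projects it onto a
   common eigenline of all rotations. *)
definition rotation_average :: "complex fps" where
  "rotation_average = (\<Sum>h\<in>rotations. fps_const (cotangent (inv h)) * \<phi> h fps_X)"

lemma rotation_average_nth_0: "rotation_average $ 0 = 0"
  unfolding rotation_average_def fps_sum_nth rotations_def
  by (simp add: real_fps_aut_nth_0 real_fps_aut_phi fps_aut_scalar_def)

lemma rotation_average_nth_1: "rotation_average $ 1 = of_nat (card rotations)"
proof -
  have "rotation_average $ 1 = (\<Sum>h\<in>rotations. cotangent (inv h) * cotangent h)"
    unfolding rotation_average_def fps_sum_nth cotangent_def by simp
  also have "\<dots> = (\<Sum>h\<in>rotations. 1)"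
    using cotangent_mult_inv_rotation by (simp add: mult.commute)
  finally show ?thesis
    by simp
qed

lemma local_parameter_rotation_average: "local_parameter rotation_average"
  using card_rotations_pos
  by (intro local_parameterI) (simp_all only: rotation_average_nth_0 rotation_average_nth_1, simp)

lemma phi_rotation_average:
  assumes \<rho>: "\<rho> \<in> rotations"
  shows "\<phi> \<rho> rotation_average = fps_const (cotangent \<rho>) * rotation_average"
proof -
  have \<rho>_aut: "real_fps_aut (\<phi> \<rho>)" and \<rho>_lin: "complex_linear_fps (\<phi> \<rho>)"
    using \<rho> by (auto simp: rotations_def real_fps_aut_phi)
  have coeff: "cotangent (inv h) = cotangent \<rho> * cotangent (inv (\<rho> \<otimes> h))" if "h \<in> rotations" for h
  proof -
    have "cotangent (inv (\<rho> \<otimes> h)) = cotangent (inv h) * cotangent (inv \<rho>)"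
      using \<rho> that rotations_subset_carrier
      by (simp add: inv_mult_group cotangent_mult_rotation subsetD
          subgroup.m_inv_closed[OF subgroup_rotations])
    then show ?thesis
      using cotangent_mult_inv_rotation[OF \<rho>] by (simp add: mult.left_commute)
  qed
  have "\<phi> \<rho> rotation_average = (\<Sum>h\<in>rotations. fps_const (cotangent (inv h)) * \<phi> (\<rho> \<otimes> h) fps_X)"
    unfolding rotation_average_def additive.sum[OF real_fps_aut_additive[OF \<rho>_aut]]
    using \<rho> \<rho>_lin rotations_subset_carrier
    by (intro sum.cong) (auto simp: phi_mult_apply complex_linear_fps_def subsetD)
  also have "\<dots> = fps_const (cotangent \<rho>) *
      (\<Sum>h\<in>rotations. fps_const (cotangent (inv (\<rho> \<otimes> h))) * \<phi> (\<rho> \<otimes> h) fps_X)"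
    by (simp add: coeff sum_distrib_left mult.assoc flip: fps_const_mult)
  also have "(\<Sum>h\<in>rotations. fps_const (cotangent (inv (\<rho> \<otimes> h))) * \<phi> (\<rho> \<otimes> h) fps_X) =
      rotation_average"
    unfolding rotation_average_def
    using \<rho> rotations_subset_carrier
    by (intro sum.reindex_bij_witness[of _ "\<lambda>h. inv \<rho> \<otimes> h" "\<lambda>h. \<rho> \<otimes> h"])
       (auto simp: m_assoc[symmetric] subsetD subgroup.m_closed[OF subgroup_rotations]
         subgroup.m_inv_closed[OF subgroup_rotations])
  finally show ?thesis .
qed

lemma rotation_eq_one:
  assumes g: "g \<in> rotations" and cot: "cotangent g = 1"
  shows "g = \<one>"
proof -
  have g_carrier: "g \<in> carrier G" and g_lin: "complex_linear_fps (\<phi> g)"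
    using g by (auto simp: rotations_def)
  have "\<phi> g rotation_average = rotation_average"
    using phi_rotation_average[OF g] cot by simp
  then have "\<phi> g a = a" for a
    by (rule real_fps_aut_fixing_local_parameter[OF real_fps_aut_phi[OF g_carrier] g_lin
          local_parameter_rotation_average])
  then have "\<phi> g = \<phi> \<one>"
    by (simp add: phi_one fun_eq_iff)
  then show ?thesis
    by (rule inj_onD[OF inj_on_phi _ g_carrier one_closed])
qed

lemma inj_on_cotangent_rotations: "inj_on cotangent rotations"
proof (rule inj_onI)
  fix g h
  assume g: "g \<in> rotations" and h: "h \<in> rotations" and eq: "cotangent g = cotangent h"
  have "cotangent (g \<otimes> inv h) = 1"
    using g h eq cotangent_mult_inv_rotation[OF h] rotations_subset_carrier
    by (simp add: cotangent_mult_rotation subsetD)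
  then have "g \<otimes> inv h = \<one>"
    using g h by (intro rotation_eq_one) (simp add: subgroup.m_closed[OF subgroup_rotations]
        subgroup.m_inv_closed[OF subgroup_rotations])
  moreover have "g \<in> carrier G" "h \<in> carrier G"
    using g h rotations_subset_carrier by auto
  ultimately have "inv (inv h) = g"
    by (intro inv_equality) simp_all
  with \<open>h \<in> carrier G\<close> show "g = h"
    by simp
qed

lemma rotation_pow_card: "g \<in> rotations \<Longrightarrow> g [^] card rotations = \<one>"
  using group.pow_order_eq_1[OF subgroup_imp_group[OF subgroup_rotations], of g]
  by (simp add: order_def flip: nat_pow_consistent)

lemma cotangent_pow_rotation: "g \<in> rotations \<Longrightarrow> cotangent (g [^] (k::nat)) = cotangent g ^ k"
  by (induction k)
     (simp_all add: cotangent_one cotangent_mult_rotation subgroup_nat_pow_closed[OF subgroup_rotations]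
       subsetD[OF rotations_subset_carrier])

lemma cotangent_rotations: "cotangent ` rotations = {z. z ^ card rotations = 1}"
proof (rule card_subset_eq)
  show "finite {z :: complex. z ^ card rotations = 1}"
    using card_rotations_pos by (intro finite_roots_unity) simp
  show "cotangent ` rotations \<subseteq> {z. z ^ card rotations = 1}"
  proof clarify
    fix g
    assume g: "g \<in> rotations"
    have "cotangent g ^ card rotations = cotangent (g [^] card rotations)"
      by (simp only: cotangent_pow_rotation[OF g])
    also have "\<dots> = 1"
      by (simp only: rotation_pow_card[OF g] cotangent_one)
    finally show "cotangent g ^ card rotations = 1" .
  qed
  have "card (cotangent ` rotations) = card rotations"
    by (rule card_image[OF inj_on_cotangent_rotations])
  also have "\<dots> = card {z :: complex. z ^ card rotations = 1}"
    by (rule card_roots_unity_eq[OF card_rotations_pos, symmetric])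
  finally show "card (cotangent ` rotations) = card {z :: complex. z ^ card rotations = 1}" .
qed

lemma norm_cotangent_rotation:
  assumes "g \<in> rotations"
  shows "norm (cotangent g) = 1"
proof -
  have "cotangent g \<in> cotangent ` rotations"
    using assms by (rule imageI)
  then have "cotangent g ^ card rotations = 1"
    unfolding cotangent_rotations by simp
  from power_eq_1_iff[OF this] card_rotations_pos show ?thesis
    by simp
qed

lemma cotangent_inv_rotation:
  assumes g: "g \<in> rotations"
  shows "cotangent (inv g) = cnj (cotangent g)"
proof -
  have "cotangent g * cnj (cotangent g) = 1"
    using norm_cotangent_rotation[OF g] by (simp flip: complex_norm_square)
  then have "cotangent g * cotangent (inv g) = cotangent g * cnj (cotangent g)"
    using cotangent_mult_inv_rotation[OF g] by simp
  moreover have "cotangent g \<noteq> 0"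
    using norm_cotangent_rotation[OF g] by auto
  ultimately show ?thesis
    by simp
qed

lemma primitive_rotation_generates_rotations:
  "\<exists>\<rho>\<in>rotations. cotangent \<rho> = exp (2 * pi * \<i> / of_nat (card rotations))
    \<and> generate G {\<rho>} = rotations"
proof -
  define n where "n = card rotations"
  have n: "n > 0"
    using card_rotations_pos by (simp add: n_def)
  have roots: "{z. z ^ n = 1} = (\<lambda>k. cis (2 * pi / n) ^ k) ` {..<n}"
    using bij_betw_imp_surj_on[OF bij_betw_roots_unity[OF n]] by (simp add: DeMoivre mult_ac)
  have "exp (2 * pi * \<i> / of_nat n) = cis (2 * pi / n)"
    by (simp add: cis_conv_exp mult_ac)
  moreover have "cis (2 * pi / n) \<in> cotangent ` rotations"
    unfolding cotangent_rotations n_def[symmetric] using n by (simp add: DeMoivre)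
  ultimately obtain \<rho> where \<rho>: "\<rho> \<in> rotations" "cotangent \<rho> = cis (2 * pi / n)"
    "cotangent \<rho> = exp (2 * pi * \<i> / of_nat n)"
    by auto
  have "rotations \<subseteq> generate G {\<rho>}"
  proof
    fix g
    assume g: "g \<in> rotations"
    then obtain k where "cotangent g = cis (2 * pi / n) ^ k"
      using cotangent_rotations roots unfolding n_def by blast
    then have "cotangent g = cotangent (\<rho> [^] k)"
      using \<rho> by (simp add: cotangent_pow_rotation)
    then have "g = \<rho> [^] k"
      using subgroup_nat_pow_closed[OF subgroup_rotations \<rho>(1)]
      by (rule inj_onD[OF inj_on_cotangent_rotations _ g])
    moreover have "\<rho> \<in> generate G {\<rho>}"
      by (rule generate.incl) simp
    ultimately show "g \<in> generate G {\<rho>}"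
      using \<rho>(1) rotations_subset_carrier
      by (simp add: subgroup_nat_pow_closed generate_is_subgroup subsetD)
  qed
  moreover have "generate G {\<rho>} \<subseteq> rotations"
    using \<rho>(1) by (intro generate_subgroup_incl subgroup_rotations) simp
  ultimately show ?thesis
    using \<rho> unfolding n_def by blast
qed

context
  fixes \<sigma>
  assumes \<sigma>: "\<sigma> \<in> carrier G" and \<sigma>_antilinear: "\<not> complex_linear_fps (\<phi> \<sigma>)"
begin

lemma reflection_mult_mem_rotations_iff:
  "g \<in> carrier G \<Longrightarrow> \<sigma> \<otimes> g \<in> rotations \<longleftrightarrow> g \<notin> rotations"
  using \<sigma> \<sigma>_antilinear by (simp add: rotations_def complex_linear_fps_phi_mult)

lemma reflection_square: "\<sigma> \<otimes> \<sigma> = \<one>"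
proof (rule rotation_eq_one)
  show \<sigma>\<sigma>: "\<sigma> \<otimes> \<sigma> \<in> rotations"
    using \<sigma> \<sigma>_antilinear by (simp add: rotations_def complex_linear_fps_phi_mult)
  have "cotangent (\<sigma> \<otimes> \<sigma>) = cotangent \<sigma> * cnj (cotangent \<sigma>)"
    using \<sigma> \<sigma>_antilinear by (simp add: cotangent_mult fps_aut_scalar_def mult.commute)
  also have "\<dots> = of_real ((norm (cotangent \<sigma>))\<^sup>2)"
    by (rule complex_norm_square[symmetric])
  finally have cot: "cotangent (\<sigma> \<otimes> \<sigma>) = of_real ((norm (cotangent \<sigma>))\<^sup>2)" .
  have "norm (cotangent (\<sigma> \<otimes> \<sigma>)) = 1"
    by (rule norm_cotangent_rotation[OF \<sigma>\<sigma>])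
  then have "\<bar>(norm (cotangent \<sigma>))\<^sup>2\<bar> = 1"
    by (simp only: cot norm_of_real)
  with cot show "cotangent (\<sigma> \<otimes> \<sigma>) = 1"
    by (simp del: of_real_power)
qed

lemma inv_reflection: "inv \<sigma> = \<sigma>"
  using reflection_square \<sigma> by (intro inv_equality) simp_all

lemma reflection_conj_rotation:
  assumes g: "g \<in> rotations"
  shows "\<sigma> \<otimes> g \<otimes> inv \<sigma> = inv g"
proof -
  have g_carrier: "g \<in> carrier G"
    using g rotations_subset_carrier by auto
  have "cotangent (\<sigma> \<otimes> (g \<otimes> \<sigma>)) = cnj (cotangent (g \<otimes> \<sigma>)) * cotangent \<sigma>"
    using g_carrier \<sigma> \<sigma>_antilinear by (simp add: cotangent_mult fps_aut_scalar_def)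
  also have "\<dots> = cnj (cotangent g) * (cnj (cotangent \<sigma>) * cotangent \<sigma>)"
    using g \<sigma> by (simp add: cotangent_mult_rotation mult.assoc)
  also have "cnj (cotangent \<sigma>) * cotangent \<sigma> = cotangent (\<sigma> \<otimes> \<sigma>)"
    using \<sigma> \<sigma>_antilinear by (simp add: cotangent_mult fps_aut_scalar_def)
  also have "cnj (cotangent g) * cotangent (\<sigma> \<otimes> \<sigma>) = cotangent (inv g)"
    using g by (simp add: reflection_square cotangent_one cotangent_inv_rotation)
  finally have "cotangent (\<sigma> \<otimes> (g \<otimes> \<sigma>)) = cotangent (inv g)" .
  moreover have "\<sigma> \<otimes> (g \<otimes> \<sigma>) \<in> rotations"
    using g g_carrier \<sigma> \<sigma>_antilinear
    by (simp add: reflection_mult_mem_rotations_iff rotations_def complex_linear_fps_phi_mult)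
  moreover have "inv g \<in> rotations"
    by (rule subgroup.m_inv_closed[OF subgroup_rotations g])
  ultimately have "\<sigma> \<otimes> (g \<otimes> \<sigma>) = inv g"
    by (rule inj_onD[OF inj_on_cotangent_rotations])
  then show ?thesis
    using g_carrier \<sigma> by (simp add: inv_reflection m_assoc)
qed

lemma rotation_mult_reflection:
  assumes g: "g \<in> rotations"
  shows "g \<otimes> \<sigma> = \<sigma> \<otimes> inv g"
proof -
  have g_carrier: "g \<in> carrier G"
    using g rotations_subset_carrier by auto
  have "\<sigma> \<otimes> inv g \<otimes> \<sigma> = g"
    using reflection_conj_rotation[OF subgroup.m_inv_closed[OF subgroup_rotations g]] g_carrier
    by (simp add: inv_reflection)
  then have "\<sigma> \<otimes> inv g \<otimes> \<sigma> \<otimes> \<sigma> = g \<otimes> \<sigma>"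
    by simp
  then show ?thesis
    using g_carrier \<sigma> by (simp add: m_assoc reflection_square)
qed

lemma carrier_eq_rotations_Un_reflections:
  "carrier G = rotations \<union> (\<lambda>g. \<sigma> \<otimes> g) ` rotations"
proof
  show "rotations \<union> (\<lambda>g. \<sigma> \<otimes> g) ` rotations \<subseteq> carrier G"
    using \<sigma> rotations_subset_carrier by auto
  show "carrier G \<subseteq> rotations \<union> (\<lambda>g. \<sigma> \<otimes> g) ` rotations"
  proof
    fix g
    assume g: "g \<in> carrier G"
    have "g = \<sigma> \<otimes> (\<sigma> \<otimes> g)"
      using g \<sigma> by (simp add: m_assoc[symmetric] reflection_square)
    then show "g \<in> rotations \<union> (\<lambda>g. \<sigma> \<otimes> g) ` rotations"
      using g \<sigma> reflection_mult_mem_rotations_iff[OF g] by blast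
  qed
qed

lemma order_eq_twice_card_rotations: "order G = 2 * card rotations"
proof -
  have "rotations \<inter> (\<lambda>g. \<sigma> \<otimes> g) ` rotations = {}"
    using reflection_mult_mem_rotations_iff rotations_subset_carrier by blast
  moreover have "inj_on (\<lambda>g. \<sigma> \<otimes> g) rotations"
    using \<sigma> rotations_subset_carrier by (auto intro: inj_onI simp: subset_iff)
  ultimately show ?thesis
    unfolding order_def
    by (subst carrier_eq_rotations_Un_reflections)
       (simp add: card_Un_disjoint finite_rotations card_image)
qed


lemma phi_reflection_const: "\<phi> \<sigma> (fps_const \<alpha>) = fps_const (cnj \<alpha>)"
  using \<sigma> \<sigma>_antilinear by (simp add: real_fps_aut_const real_fps_aut_phi fps_aut_scalar_def)

lemma phi_reflection_reflection: "\<phi> \<sigma> (\<phi> \<sigma> a) = a"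
  by (simp add: reflection_square phi_one \<sigma> flip: phi_mult_apply)

lemma phi_reflection_rotation_average_eigen:
  assumes \<rho>: "\<rho> \<in> rotations"
  shows "\<phi> \<rho> (\<phi> \<sigma> rotation_average) = fps_const (cotangent \<rho>) * \<phi> \<sigma> rotation_average"
proof -
  have \<rho>_carrier: "\<rho> \<in> carrier G" and \<rho>_inv: "inv \<rho> \<in> rotations"
    using \<rho> rotations_subset_carrier subgroup.m_inv_closed[OF subgroup_rotations] by auto
  have "\<phi> \<rho> (\<phi> \<sigma> rotation_average) = \<phi> \<sigma> (\<phi> (inv \<rho>) rotation_average)"
    by (simp add: \<rho>_carrier \<sigma> rotation_mult_reflection[OF \<rho>] flip: phi_mult_apply)
  also have "\<dots> = fps_const (cotangent \<rho>) * \<phi> \<sigma> rotation_average"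
    by (simp add: phi_rotation_average[OF \<rho>_inv] cotangent_inv_rotation[OF \<rho>]
        real_fps_aut_mult[OF real_fps_aut_phi[OF \<sigma>]] phi_reflection_const)
  finally show ?thesis .
qed

lemma
  shows phi_reflection_rotation_average_nth_0: "\<phi> \<sigma> rotation_average $ 0 = 0"
    and phi_reflection_rotation_average_nth_1:
      "\<phi> \<sigma> rotation_average $ 1 = of_nat (card rotations) * cotangent \<sigma>"
  unfolding cotangent_def
  by (simp_all only: real_fps_aut_nth_0[OF real_fps_aut_phi[OF \<sigma>]] rotation_average_nth_0
      real_fps_aut_nth_1[OF real_fps_aut_phi[OF \<sigma>], of rotation_average] rotation_average_nth_1)
     (simp_all add: fps_aut_scalar_def \<sigma>_antilinear)

(* u and v = phi sigma u are swapped by phi sigma and are eigenvectors of every rotation with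
   the same eigenvalue; their linear coefficients n and n * cotangent sigma cannot satisfy
   both u_1 + v_1 = 0 and u_1 - v_1 = 0. *)
lemma reflection_invariant_local_parameter:
  "\<exists>w. local_parameter w \<and> \<phi> \<sigma> w = w \<and> (\<forall>\<rho>\<in>rotations. \<phi> \<rho> w = fps_const (cotangent \<rho>) * w)"
proof -
  define u where "u = rotation_average"
  define v where "v = \<phi> \<sigma> u"
  have \<sigma>_aut: "real_fps_aut (\<phi> \<sigma>)"
    by (rule real_fps_aut_phi[OF \<sigma>])
  note \<sigma>_additive = additive.add[OF real_fps_aut_additive[OF \<sigma>_aut]]
    additive.diff[OF real_fps_aut_additive[OF \<sigma>_aut]]
  have \<sigma>_v: "\<phi> \<sigma> v = u"
    by (simp add: v_def phi_reflection_reflection)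
  note eigen = phi_rotation_average[folded u_def] phi_reflection_rotation_average_eigen[folded u_def v_def]
  have "(u + v) $ 1 = of_nat (card rotations) * (1 + cotangent \<sigma>)"
    "(fps_const \<i> * (u - v)) $ 1 = \<i> * of_nat (card rotations) * (1 - cotangent \<sigma>)"
    using rotation_average_nth_1 phi_reflection_rotation_average_nth_1
    unfolding u_def v_def by (simp_all add: algebra_simps)
  then have "(u + v) $ 1 \<noteq> 0 \<or> (fps_const \<i> * (u - v)) $ 1 \<noteq> 0"
    using card_rotations_pos by (auto simp: add_eq_0_iff)
  moreover have "(u + v) $ 0 = 0" "(fps_const \<i> * (u - v)) $ 0 = 0"
    using rotation_average_nth_0 phi_reflection_rotation_average_nth_0
    unfolding u_def v_def by simp_all
  moreover have "\<phi> \<sigma> (u + v) = u + v"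
    by (simp add: \<sigma>_additive \<sigma>_v flip: v_def)
  moreover have "\<phi> \<sigma> (fps_const \<i> * (u - v)) = fps_const \<i> * (u - v)"
    by (simp add: real_fps_aut_mult[OF \<sigma>_aut] phi_reflection_const \<sigma>_additive \<sigma>_v
        algebra_simps flip: v_def fps_const_neg)
  moreover have "\<phi> \<rho> (u + v) = fps_const (cotangent \<rho>) * (u + v)" if "\<rho> \<in> rotations" for \<rho>
    using phi_rotation_lincomb[OF that, of 1 u 1 v] by (simp add: eigen[OF that] distrib_left)
  moreover have "\<phi> \<rho> (fps_const \<i> * (u - v)) = fps_const (cotangent \<rho>) * (fps_const \<i> * (u - v))"
    if "\<rho> \<in> rotations" for \<rho>
    using phi_rotation_lincomb[OF that, of \<i> u "- \<i>" v]
    by (simp add: eigen[OF that] algebra_simps flip: fps_const_neg)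
  ultimately show ?thesis
    using local_parameterI by metis
qed

lemma generate_reflection_rotation_eq_carrier:
  assumes \<rho>: "generate G {\<rho>} = rotations"
  shows "generate G {\<sigma>, \<rho>} = carrier G"
proof
  have "\<rho> \<in> carrier G"
    using \<rho> generate.incl[of \<rho> "{\<rho>}" G] rotations_subset_carrier by auto
  with \<sigma> show "generate G {\<sigma>, \<rho>} \<subseteq> carrier G"
    by (intro generate_incl) simp
  have rotations: "rotations \<subseteq> generate G {\<sigma>, \<rho>}"
    unfolding \<rho>[symmetric] using \<open>\<rho> \<in> carrier G\<close> \<sigma> by (intro mono_generate) auto
  moreover have "\<sigma> \<otimes> g \<in> generate G {\<sigma>, \<rho>}" if "g \<in> rotations" for g
    by (rule generate.eng[OF generate.incl subsetD[OF rotations that]]) simp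
  ultimately show "carrier G \<subseteq> generate G {\<sigma>, \<rho>}"
    by (subst carrier_eq_rotations_Un_reflections) auto
qed

end

end

theorem proposition6p1:
  fixes G (structure) and \<phi> :: "'g \<Rightarrow> complex fps \<Rightarrow> complex fps"
  assumes "group G" and "finite (carrier G)"
    and "\<And>g. g \<in> carrier G \<Longrightarrow> real_fps_aut (\<phi> g)"
    and "\<And>g h. g \<in> carrier G \<Longrightarrow> h \<in> carrier G \<Longrightarrow> \<phi> (g \<otimes> h) = \<phi> g \<circ> \<phi> h"
    and "inj_on \<phi> (carrier G)"
  shows "((\<forall>g \<in> carrier G. complex_linear_fps (\<phi> g)) \<and>
           (\<exists>n::nat. \<exists>\<rho> \<in> carrier G. \<exists>w.
              n \<ge> 1 \<and> order G = n \<and> generate G {\<rho>} = carrier G \<and> \<rho> [^] n = \<one> \<and>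
              local_parameter w \<and>
              \<phi> \<rho> w = fps_const (exp (2 * pi * \<i> / of_nat n)) * w))
       \<or> ((\<not> (\<forall>g \<in> carrier G. complex_linear_fps (\<phi> g))) \<and>
           (\<exists>n::nat. \<exists>\<sigma> \<in> carrier G. \<exists>\<rho> \<in> carrier G. \<exists>w.
              n \<ge> 1 \<and> order G = 2 * n \<and> generate G {\<sigma>, \<rho>} = carrier G \<and>
              \<sigma> [^] (2::nat) = \<one> \<and> \<rho> [^] n = \<one> \<and>
              \<sigma> \<otimes> \<rho> \<otimes> inv \<sigma> = inv \<rho> \<and>
              local_parameter w \<and>
              (\<forall>\<alpha>. \<phi> \<sigma> (fps_const \<alpha>) = fps_const (cnj \<alpha>)) \<and> \<phi> \<sigma> w = w \<and>
              (\<forall>\<alpha>. \<phi> \<rho> (fps_const \<alpha>) = fps_const \<alpha>) \<and>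
              \<phi> \<rho> w = fps_const (exp (2 * pi * \<i> / of_nat n)) * w))"
proof -
  interpret faithful_fps_action G \<phi>
    using assms by (intro faithful_fps_action.intro faithful_fps_action_axioms.intro) auto
  obtain \<rho> where \<rho>: "\<rho> \<in> rotations" "generate G {\<rho>} = rotations"
    and cot_\<rho>: "cotangent \<rho> = exp (2 * pi * \<i> / of_nat (card rotations))"
    using primitive_rotation_generates_rotations by blast
  have \<rho>_carrier: "\<rho> \<in> carrier G"
    using \<rho>(1) rotations_subset_carrier by auto
  have n: "card rotations \<ge> 1" "\<rho> [^] card rotations = \<one>"
    using card_rotations_pos rotation_pow_card[OF \<rho>(1)] by auto
  show ?thesis
  proof (cases "\<forall>g \<in> carrier G. complex_linear_fps (\<phi> g)")
    case True
    then have "rotations = carrier G"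
      by (auto simp: rotations_def)
    then have "order G = card rotations" "generate G {\<rho>} = carrier G"
      using \<rho>(2) by (simp_all add: order_def)
    with True show ?thesis
      using \<rho>_carrier n local_parameter_rotation_average phi_rotation_average[OF \<rho>(1), unfolded cot_\<rho>]
      by (intro disjI1 conjI exI[of _ "card rotations"] bexI[of _ \<rho>] exI[of _ rotation_average])
         simp_all
  next
    case False
    then obtain \<sigma> where \<sigma>: "\<sigma> \<in> carrier G" "\<not> complex_linear_fps (\<phi> \<sigma>)"
      by blast
    obtain w where w: "local_parameter w" "\<phi> \<sigma> w = w" "\<phi> \<rho> w = fps_const (cotangent \<rho>) * w"
      using reflection_invariant_local_parameter[OF \<sigma>] \<rho>(1) by blast
    have "\<sigma> [^] (2::nat) = \<one>"
      using \<sigma> reflection_square[OF \<sigma>] by (simp add: numeral_2_eq_2)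
    with False show ?thesis
      using \<sigma> phi_reflection_const[OF \<sigma>] \<rho>_carrier phi_rotation_const[OF \<rho>(1)] n w cot_\<rho>
        reflection_conj_rotation[OF \<sigma> \<rho>(1)]
        order_eq_twice_card_rotations[OF \<sigma>] generate_reflection_rotation_eq_carrier[OF \<sigma> \<rho>(2)]
      by (intro disjI2 conjI exI[of _ "card rotations"] bexI[of _ \<sigma>] bexI[of _ \<rho>] exI[of _ w] allI)
         simp_all
  qed
qed

end
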